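(* Let $\{P_t\}_{t\geq 0}$ be a Markov--Feller semigroup on a Polish space $\mathcal{X}$. If $\{P_t\}_{t\geq 0}$ is asymptotically stable, then it is eventually continuous at every point of $\mathcal{X}$. Similarly, if $\{P_t\}_{t\geq 0}$ is weakly-* mean ergodic, then it is Ces\`aro eventually continuous at every point of $\mathcal{X}$.
   Context: $(\mathcal{X},\rho)$ is a Polish space, $\mathcal{P}(\mathcal{X})$ the Borel probability measures. A Markov--Feller semigroup $\{P_t\}_{t\ge0}$ is a semigroup of mass-preserving positively linear operators on finite Borel measures, each with a dual linear operator on bounded Borel functions ($\langle f,P_t\mu\rangle=\langle P_tf,\mu\rangle$) preserving bounded continuous functions. For $t>0$: $Q_tf=\frac1t\int_0^tP_sf\,ds$, $Q_t\mu=\frac1t\int_0^tP_s\mu\,ds$. Asymptotically stable: unique invariant probability $\mu_*$ with $P_t\mu\to\mu_*$ weakly for all $\mu\in\mathcal{P}(\mathcal{X})$. Weakly-* mean ergodic: unique invariant probability $\mu_*$ with $Q_t\mu\to\mu_*$ weakly for all $\mu\in\mathcal{P}(\mathcal{X})$. Eventually continuous at $z$: for every bounded Lipschitz $f$, $\limsup_{x\to z}\limsup_{t\to\infty}|P_tf(x)-P_tf(z)|=0$; Ces\`aro eventually continuous: the same with $Q_t$ in place of $P_t$. *)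

theory Defs
  imports "HOL-Probability.Probability"
begin

definition finite_borel_measure :: "'a::topological_space measure \<Rightarrow> bool" where
  "finite_borel_measure \<mu> \<longleftrightarrow> sets \<mu> = sets borel \<and> finite_measure \<mu>"

definition prob_borel_measure :: "'a::topological_space measure \<Rightarrow> bool" where
  "prob_borel_measure \<mu> \<longleftrightarrow> sets \<mu> = sets borel \<and> prob_space \<mu>"

definition bdd_borel_fun :: "('a::topological_space \<Rightarrow> real) \<Rightarrow> bool" where
  "bdd_borel_fun f \<longleftrightarrow> f \<in> borel_measurable borel \<and> bounded (range f)"

definition bdd_cont_fun :: "('a::topological_space \<Rightarrow> real) \<Rightarrow> bool" where
  "bdd_cont_fun f \<longleftrightarrow> continuous_on UNIV f \<and> bounded (range f)"

definition bdd_lipschitz_fun :: "('a::metric_space \<Rightarrow> real) \<Rightarrow> bool" where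
  "bdd_lipschitz_fun f \<longleftrightarrow> bounded (range f) \<and> (\<exists>L. L-lipschitz_on UNIV f)"

definition meas_comb :: "real \<Rightarrow> 'a::topological_space measure \<Rightarrow> real \<Rightarrow> 'a measure \<Rightarrow> 'a measure" where
  "meas_comb a \<mu> b \<nu> = measure_of (space borel) (sets borel)
     (\<lambda>A. ennreal a * emeasure \<mu> A + ennreal b * emeasure \<nu> A)"

text \<open>Pm t is the action of P_t on finite Borel measures, Pf t its dual action on
  bounded Borel functions.\<close>
definition markov_feller_semigroup ::
  "(real \<Rightarrow> 'a::topological_space measure \<Rightarrow> 'a measure) \<Rightarrow>
   (real \<Rightarrow> ('a \<Rightarrow> real) \<Rightarrow> ('a \<Rightarrow> real)) \<Rightarrow> bool" where
  "markov_feller_semigroup Pm Pf \<longleftrightarrow>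
     \<comment> \<open>maps finite Borel measures to finite Borel measures, preserving mass\<close>
     (\<forall>t\<ge>0. \<forall>\<mu>. finite_borel_measure \<mu> \<longrightarrow>
        finite_borel_measure (Pm t \<mu>) \<and> emeasure (Pm t \<mu>) (space (Pm t \<mu>)) = emeasure \<mu> (space \<mu>))
   \<comment> \<open>positive linearity\<close>
   \<and> (\<forall>t\<ge>0. \<forall>\<mu> \<nu> a b. finite_borel_measure \<mu> \<and> finite_borel_measure \<nu> \<and> a \<ge> 0 \<and> b \<ge> 0 \<longrightarrow>
        Pm t (meas_comb a \<mu> b \<nu>) = meas_comb a (Pm t \<mu>) b (Pm t \<nu>))
   \<comment> \<open>semigroup property\<close>
   \<and> (\<forall>\<mu>. finite_borel_measure \<mu> \<longrightarrow> Pm 0 \<mu> = \<mu>)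
   \<and> (\<forall>s\<ge>0. \<forall>t\<ge>0. \<forall>\<mu>. finite_borel_measure \<mu> \<longrightarrow> Pm (s + t) \<mu> = Pm t (Pm s \<mu>))
   \<comment> \<open>the dual operator is a linear operator on bounded Borel functions\<close>
   \<and> (\<forall>t\<ge>0. \<forall>f. bdd_borel_fun f \<longrightarrow> bdd_borel_fun (Pf t f))
   \<and> (\<forall>t\<ge>0. \<forall>f g a b. bdd_borel_fun f \<and> bdd_borel_fun g \<longrightarrow>
        Pf t (\<lambda>x. a * f x + b * g x) = (\<lambda>x. a * Pf t f x + b * Pf t g x))
   \<comment> \<open>duality\<close>
   \<and> (\<forall>t\<ge>0. \<forall>f \<mu>. bdd_borel_fun f \<and> finite_borel_measure \<mu> \<longrightarrow>
        (\<integral>x. f x \<partial>(Pm t \<mu>)) = (\<integral>x. Pf t f x \<partial>\<mu>))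
   \<comment> \<open>Feller property\<close>
   \<and> (\<forall>t\<ge>0. \<forall>f. bdd_cont_fun f \<longrightarrow> bdd_cont_fun (Pf t f))"

definition Qf :: "(real \<Rightarrow> ('a \<Rightarrow> real) \<Rightarrow> ('a \<Rightarrow> real)) \<Rightarrow> real \<Rightarrow> ('a \<Rightarrow> real) \<Rightarrow> 'a \<Rightarrow> real" where
  "Qf Pf t f x = (1 / t) * (LINT s:{0..t}|lborel. Pf s f x)"

definition invariant_prob ::
  "(real \<Rightarrow> 'a::topological_space measure \<Rightarrow> 'a measure) \<Rightarrow> 'a measure \<Rightarrow> bool" where
  "invariant_prob Pm \<mu> \<longleftrightarrow> prob_borel_measure \<mu> \<and> (\<forall>t\<ge>0. Pm t \<mu> = \<mu>)"

definition weak_conv_top :: "(real \<Rightarrow> 'a::topological_space measure) \<Rightarrow> 'a measure \<Rightarrow> bool" where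
  "weak_conv_top M N \<longleftrightarrow>
     (\<forall>f. bdd_cont_fun f \<longrightarrow> ((\<lambda>t. \<integral>x. f x \<partial>(M t)) \<longlongrightarrow> (\<integral>x. f x \<partial>N)) at_top)"

definition asymptotically_stable ::
  "(real \<Rightarrow> 'a::topological_space measure \<Rightarrow> 'a measure) \<Rightarrow> bool" where
  "asymptotically_stable Pm \<longleftrightarrow>
     (\<exists>\<mu>s. invariant_prob Pm \<mu>s \<and> (\<forall>\<nu>. invariant_prob Pm \<nu> \<longrightarrow> \<nu> = \<mu>s) \<and>
        (\<forall>\<mu>. prob_borel_measure \<mu> \<longrightarrow> weak_conv_top (\<lambda>t. Pm t \<mu>) \<mu>s))"

text \<open>Weak convergence of Q_t \<mu> = (1/t)\<integral>_0^t P_s \<mu> ds, expressed through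
  the integrals \<langle>f, Q_t \<mu>\<rangle> = (1/t)\<integral>_0^t \<langle>f, P_s \<mu>\<rangle> ds against bounded continuous f.\<close>
definition weak_star_mean_ergodic ::
  "(real \<Rightarrow> 'a::topological_space measure \<Rightarrow> 'a measure) \<Rightarrow> bool" where
  "weak_star_mean_ergodic Pm \<longleftrightarrow>
     (\<exists>\<mu>s. invariant_prob Pm \<mu>s \<and> (\<forall>\<nu>. invariant_prob Pm \<nu> \<longrightarrow> \<nu> = \<mu>s) \<and>
        (\<forall>\<mu>. prob_borel_measure \<mu> \<longrightarrow>
           (\<forall>f. bdd_cont_fun f \<longrightarrow>
              ((\<lambda>t. (1 / t) * (LINT s:{0..t}|lborel. (\<integral>x. f x \<partial>(Pm s \<mu>))))
                 \<longlongrightarrow> (\<integral>x. f x \<partial>\<mu>s)) at_top)))"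

definition eventually_continuous_at ::
  "(real \<Rightarrow> ('a::metric_space \<Rightarrow> real) \<Rightarrow> ('a \<Rightarrow> real)) \<Rightarrow> 'a \<Rightarrow> bool" where
  "eventually_continuous_at Pf z \<longleftrightarrow>
     (\<forall>f. bdd_lipschitz_fun f \<longrightarrow>
        Limsup (nhds z) (\<lambda>x. Limsup at_top (\<lambda>t. ereal \<bar>Pf t f x - Pf t f z\<bar>)) = 0)"

definition cesaro_eventually_continuous_at ::
  "(real \<Rightarrow> ('a::metric_space \<Rightarrow> real) \<Rightarrow> ('a \<Rightarrow> real)) \<Rightarrow> 'a \<Rightarrow> bool" where
  "cesaro_eventually_continuous_at Pf z \<longleftrightarrow>
     (\<forall>f. bdd_lipschitz_fun f \<longrightarrow>
        Limsup (nhds z) (\<lambda>x. Limsup at_top (\<lambda>t. ereal \<bar>Qf Pf t f x - Qf Pf t f z\<bar>)) = 0)"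

end

theory Submission
  imports Defs
begin

text \<open>Testing against a Dirac measure gives P_t f(x) = \<langle>f, P_t \<delta>_x\<rangle>, and likewise
  Q_t f(x) = \<langle>f, Q_t \<delta>_x\<rangle>. Under asymptotic stability (resp. weak-* mean ergodicity)
  these converge, for every bounded continuous f, to \<langle>f, \<mu>_*\<rangle>, a limit that does not
  depend on x. Hence |P_t f(x) - P_t f(z)| (resp. |Q_t f(x) - Q_t f(z)|) tends to 0 for
  every x and z, so already the inner limsup in the definition of eventual continuity vanishes.\<close>

lemma Limsup_Limsup_abs_diff_eq_0:
  fixes g :: "'b \<Rightarrow> 'a \<Rightarrow> real"
  assumes "F \<noteq> bot" and "G \<noteq> bot" and "\<And>x. ((\<lambda>t. g t x) \<longlongrightarrow> L) G"
  shows "Limsup F (\<lambda>x. Limsup G (\<lambda>t. ereal \<bar>g t x - g t z\<bar>)) = 0"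
proof -
  have "Limsup G (\<lambda>t. ereal \<bar>g t x - g t z\<bar>) = 0" for x
  proof -
    have "((\<lambda>t. \<bar>g t x - g t z\<bar>) \<longlongrightarrow> \<bar>L - L\<bar>) G"
      by (intro tendsto_intros assms)
    then have "((\<lambda>t. ereal \<bar>g t x - g t z\<bar>) \<longlongrightarrow> 0) G"
      by (simp add: zero_ereal_def tendsto_ereal)
    then show ?thesis
      by (rule lim_imp_Limsup[OF assms(2)])
  qed
  then show ?thesis
    by (simp add: Limsup_const assms(1))
qed

lemma bdd_cont_fun_imp_bdd_borel_fun: "bdd_cont_fun f \<Longrightarrow> bdd_borel_fun f"
  unfolding bdd_cont_fun_def bdd_borel_fun_def
  using borel_measurable_continuous_onI by blast

lemma bdd_lipschitz_fun_imp_bdd_cont_fun: "bdd_lipschitz_fun f \<Longrightarrow> bdd_cont_fun f"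
  unfolding bdd_lipschitz_fun_def bdd_cont_fun_def
  using lipschitz_on_continuous_on by blast

lemma prob_borel_measure_return: "prob_borel_measure (return borel x)"
  unfolding prob_borel_measure_def by (simp add: prob_space_return)

lemma finite_borel_measure_return: "finite_borel_measure (return borel x)"
  using prob_borel_measure_return[of x]
  unfolding prob_borel_measure_def finite_borel_measure_def
  by (auto intro: prob_space.finite_measure)

lemma markov_feller_integral_return:
  assumes mf: "markov_feller_semigroup Pm Pf" and f: "bdd_borel_fun f" and t: "t \<ge> 0"
  shows "(\<integral>y. f y \<partial>Pm t (return borel x)) = Pf t f x"
proof -
  have "Pf t f \<in> borel_measurable borel"
    using mf f t unfolding markov_feller_semigroup_def bdd_borel_fun_def by blast
  moreover have "(\<integral>y. f y \<partial>Pm t (return borel x)) = (\<integral>y. Pf t f y \<partial>return borel x)"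
    using mf f t finite_borel_measure_return[of x] unfolding markov_feller_semigroup_def by blast
  ultimately show ?thesis
    by (simp add: integral_return)
qed

lemma asymptotically_stable_tendsto_Pf:
  assumes mf: "markov_feller_semigroup Pm Pf" and "asymptotically_stable Pm"
  obtains \<mu>s where "\<And>f x. bdd_cont_fun f \<Longrightarrow> ((\<lambda>t. Pf t f x) \<longlongrightarrow> (\<integral>y. f y \<partial>\<mu>s)) at_top"
proof -
  obtain \<mu>s where conv: "\<And>\<mu>. prob_borel_measure \<mu> \<Longrightarrow> weak_conv_top (\<lambda>t. Pm t \<mu>) \<mu>s"
    using \<open>asymptotically_stable Pm\<close> unfolding asymptotically_stable_def by blast
  have "((\<lambda>t. Pf t f x) \<longlongrightarrow> (\<integral>y. f y \<partial>\<mu>s)) at_top" if f: "bdd_cont_fun f" for f x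
  proof -
    have "((\<lambda>t. \<integral>y. f y \<partial>Pm t (return borel x)) \<longlongrightarrow> (\<integral>y. f y \<partial>\<mu>s)) at_top"
      using conv[OF prob_borel_measure_return] f unfolding weak_conv_top_def by blast
    moreover have "\<forall>\<^sub>F t in at_top. (\<integral>y. f y \<partial>Pm t (return borel x)) = Pf t f x"
      using eventually_ge_at_top[of "0::real"]
      by eventually_elim
        (rule markov_feller_integral_return[OF mf bdd_cont_fun_imp_bdd_borel_fun[OF f]])
    ultimately show ?thesis
      by (rule Lim_transform_eventually)
  qed
  then show ?thesis
    using that by blast
qed

lemma weak_star_mean_ergodic_tendsto_Qf:
  assumes mf: "markov_feller_semigroup Pm Pf" and "weak_star_mean_ergodic Pm"
  obtains \<mu>s where "\<And>f x. bdd_cont_fun f \<Longrightarrow> ((\<lambda>t. Qf Pf t f x) \<longlongrightarrow> (\<integral>y. f y \<partial>\<mu>s)) at_top"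
proof -
  obtain \<mu>s where conv: "\<And>\<mu> f. prob_borel_measure \<mu> \<Longrightarrow> bdd_cont_fun f \<Longrightarrow>
      ((\<lambda>t. (1 / t) * (LINT s:{0..t}|lborel. (\<integral>y. f y \<partial>Pm s \<mu>))) \<longlongrightarrow> (\<integral>y. f y \<partial>\<mu>s)) at_top"
    using \<open>weak_star_mean_ergodic Pm\<close> unfolding weak_star_mean_ergodic_def by blast
  have "((\<lambda>t. Qf Pf t f x) \<longlongrightarrow> (\<integral>y. f y \<partial>\<mu>s)) at_top" if f: "bdd_cont_fun f" for f x
  proof -
    have dual: "(LINT s:{0..t}|lborel. (\<integral>y. f y \<partial>Pm s (return borel x)))
        = (LINT s:{0..t}|lborel. Pf s f x)" for t
      by (rule set_lebesgue_integral_cong)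
        (simp_all add: markov_feller_integral_return[OF mf bdd_cont_fun_imp_bdd_borel_fun[OF f]])
    show ?thesis
      using conv[OF prob_borel_measure_return[of x] f] unfolding dual Qf_def .
  qed
  then show ?thesis
    using that by blast
qed

theorem proposition2p11:
  fixes Pm :: "real \<Rightarrow> 'a::polish_space measure \<Rightarrow> 'a measure"
    and Pf :: "real \<Rightarrow> ('a \<Rightarrow> real) \<Rightarrow> ('a \<Rightarrow> real)"
  assumes "markov_feller_semigroup Pm Pf"
  shows "(asymptotically_stable Pm \<longrightarrow> (\<forall>z. eventually_continuous_at Pf z))
       \<and> (weak_star_mean_ergodic Pm \<longrightarrow> (\<forall>z. cesaro_eventually_continuous_at Pf z))"
proof (intro conjI impI allI)
  fix z
  assume "asymptotically_stable Pm"
  then obtain \<mu>s where "\<And>f x. bdd_cont_fun f \<Longrightarrow> ((\<lambda>t. Pf t f x) \<longlongrightarrow> (\<integral>y. f y \<partial>\<mu>s)) at_top"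
    using assms asymptotically_stable_tendsto_Pf by blast
  then show "eventually_continuous_at Pf z"
    unfolding eventually_continuous_at_def
    by (auto intro!: Limsup_Limsup_abs_diff_eq_0 bdd_lipschitz_fun_imp_bdd_cont_fun)
next
  fix z
  assume "weak_star_mean_ergodic Pm"
  then obtain \<mu>s where "\<And>f x. bdd_cont_fun f \<Longrightarrow> ((\<lambda>t. Qf Pf t f x) \<longlongrightarrow> (\<integral>y. f y \<partial>\<mu>s)) at_top"
    using assms weak_star_mean_ergodic_tendsto_Qf by blast
  then show "cesaro_eventually_continuous_at Pf z"
    unfolding cesaro_eventually_continuous_at_def
    by (auto intro!: Limsup_Limsup_abs_diff_eq_0 bdd_lipschitz_fun_imp_bdd_cont_fun)
qed

end
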